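(* Let $(a_n)_{n=1}^\infty$ and $(A_n)_{n=1}^\infty$ be sequences of real numbers such that (i) $0<a_{n+1}\le a_n/3$ for all $n\in\mathbb{N}$, and (ii) $\sum_{n=1}^\infty|A_n|/a_n<\infty$. Then the function $f$ on $[0,a_1]$ defined by $$f(x)=\frac{A_n-A_{n+1}}{a_n-a_{n+1}}(x-a_{n+1})+A_{n+1}\ \text{ if } x\in(a_{n+1},a_n],\qquad f(0)=0,$$ is a DCR function on $[0,a_1]$.
   Context: A function on an open interval is DC if it is the difference of two convex functions. A function defined on a nonempty set $D\subset\mathbb{R}$ is DCR if it is the restriction of a DC function defined on $\mathbb{R}$. *)

theory Defs
  imports "HOL-Analysis.Analysis"
begin

definition DC_on :: "real set \<Rightarrow> (real \<Rightarrow> real) \<Rightarrow> bool" where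
  "DC_on I f \<longleftrightarrow> (\<exists>g h. convex_on I g \<and> convex_on I h \<and> (\<forall>x\<in>I. f x = g x - h x))"

definition DCR_on :: "real set \<Rightarrow> (real \<Rightarrow> real) \<Rightarrow> bool" where
  "DCR_on D f \<longleftrightarrow> D \<noteq> {} \<and> (\<exists>F. DC_on UNIV F \<and> (\<forall>x\<in>D. f x = F x))"

end

theory Submission
  imports Defs
begin

text \<open>
  The function f is the broken line through the points (a n, A n), which accumulate at (0, 0).
  It is the series of tents A n * hat_n, where hat_n rises from 0 at a (n + 1) to 1 at a n and
  falls back to 0 at a (n - 1). Each tent is a combination of three ramps max 0 (x - t) whose
  coefficients are O(1 / a n), because a (n + 1) \<le> a n / 3 keeps neighbouring nodes apart;
  so condition (ii) makes the three resulting ramp series absolutely summable. A ramp series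
  with nonnegative coefficients is convex, and splitting the coefficients into positive and
  negative parts exhibits the extension of f to the whole line as a DC function.
\<close>

lemma convex_on_max:
  assumes "convex_on S f" "convex_on S g"
  shows "convex_on S (\<lambda>x. max (f x) (g x))"
proof -
  have "convex S" using assms(1) by (rule convex_on_imp_convex)
  then show ?thesis
  proof (rule convex_onI[rotated])
    fix t :: real and x y assume "0 < t" "t < 1" "x \<in> S" "y \<in> S"
    then have "f ((1 - t) *\<^sub>R x + t *\<^sub>R y) \<le> (1 - t) * f x + t * f y"
          and "g ((1 - t) *\<^sub>R x + t *\<^sub>R y) \<le> (1 - t) * g x + t * g y"
      using assms by (auto intro: convex_onD)
    moreover have "(1 - t) * f x + t * f y \<le> (1 - t) * max (f x) (g x) + t * max (f y) (g y)"
          and "(1 - t) * g x + t * g y \<le> (1 - t) * max (f x) (g x) + t * max (f y) (g y)"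
      using \<open>0 < t\<close> \<open>t < 1\<close> by (intro add_mono mult_left_mono; simp)+
    ultimately show "max (f ((1 - t) *\<^sub>R x + t *\<^sub>R y)) (g ((1 - t) *\<^sub>R x + t *\<^sub>R y))
        \<le> (1 - t) * max (f x) (g x) + t * max (f y) (g y)" by linarith
  qed
qed

lemma convex_on_ramp: "convex_on UNIV (\<lambda>x::real. max 0 (x - t))"
  by (intro convex_on_max) (auto simp: convex_on_const intro: convex_onI simp: algebra_simps)

lemma convex_on_suminf:
  assumes convex: "\<And>n. convex_on S (f n)"
    and summable: "\<And>x. x \<in> S \<Longrightarrow> summable (\<lambda>n. f n x)"
  shows "convex_on S (\<lambda>x. \<Sum>n. f n x)"
proof (rule convex_onI)
  show "convex S" using convex_on_imp_convex[OF convex] .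
  fix t :: real and x y assume t: "0 < t" "t < 1" and xy: "x \<in> S" "y \<in> S"
  have "(\<Sum>n. f n ((1 - t) *\<^sub>R x + t *\<^sub>R y)) \<le> (\<Sum>n. (1 - t) * f n x + t * f n y)"
  proof (rule suminf_le)
    show "f n ((1 - t) *\<^sub>R x + t *\<^sub>R y) \<le> (1 - t) * f n x + t * f n y" for n
      using convex_onD[OF convex] t xy by simp
    show "summable (\<lambda>n. f n ((1 - t) *\<^sub>R x + t *\<^sub>R y))"
      using summable convex_on_imp_convex[OF convex] t xy by (simp add: convex_alt)
    show "summable (\<lambda>n. (1 - t) * f n x + t * f n y)"
      using summable xy by (intro summable_add summable_mult)
  qed
  also have "\<dots> = (1 - t) * (\<Sum>n. f n x) + t * (\<Sum>n. f n y)"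
    using summable xy by (simp add: suminf_add[symmetric] suminf_mult summable_mult)
  finally show "(\<Sum>n. f n ((1 - t) *\<^sub>R x + t *\<^sub>R y))
      \<le> (1 - t) * (\<Sum>n. f n x) + t * (\<Sum>n. f n y)" .
qed

lemma summable_ramp_series:
  fixes c t :: "nat \<Rightarrow> real"
  assumes "summable (\<lambda>n. \<bar>c n\<bar>)" and "\<And>n. \<bar>t n\<bar> \<le> B"
  shows "summable (\<lambda>n. c n * max 0 (x - t n))"
proof (rule summable_comparison_test')
  show "summable (\<lambda>n. \<bar>c n\<bar> * (\<bar>x\<bar> + B))"
    using assms(1) by (rule summable_mult2)
  show "norm (c n * max 0 (x - t n)) \<le> \<bar>c n\<bar> * (\<bar>x\<bar> + B)" for n
    using assms(2)[of n] by (auto simp: abs_mult intro!: mult_left_mono)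
qed

lemma DC_on_ramp_series:
  fixes c t :: "nat \<Rightarrow> real"
  assumes "summable (\<lambda>n. \<bar>c n\<bar>)" and "\<And>n. \<bar>t n\<bar> \<le> B"
  shows "DC_on UNIV (\<lambda>x. \<Sum>n. c n * max 0 (x - t n))"
proof -
  define pos where "pos n = max 0 (c n)" for n
  define neg where "neg n = max 0 (- c n)" for n
  have summable_pos: "summable (\<lambda>n. \<bar>pos n\<bar>)" and summable_neg: "summable (\<lambda>n. \<bar>neg n\<bar>)"
    unfolding pos_def neg_def by (auto intro!: summable_comparison_test'[OF assms(1)])
  have convex: "convex_on UNIV (\<lambda>x. \<Sum>n. d n * max 0 (x - t n))"
    if "\<And>n. 0 \<le> d n" "summable (\<lambda>n. \<bar>d n\<bar>)" for d
    using that summable_ramp_series[OF _ assms(2)]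
    by (intro convex_on_suminf convex_on_cmul convex_on_ramp) auto
  have "(\<Sum>n. c n * max 0 (x - t n))
      = (\<Sum>n. pos n * max 0 (x - t n)) - (\<Sum>n. neg n * max 0 (x - t n))" for x
  proof -
    have "c n * max 0 (x - t n) = pos n * max 0 (x - t n) - neg n * max 0 (x - t n)" for n
      unfolding pos_def neg_def by (simp add: max_def algebra_simps)
    then show ?thesis
      using summable_ramp_series[OF _ assms(2)] summable_pos summable_neg by (simp add: suminf_diff)
  qed
  moreover have "convex_on UNIV (\<lambda>x. \<Sum>n. pos n * max 0 (x - t n))"
    and "convex_on UNIV (\<lambda>x. \<Sum>n. neg n * max 0 (x - t n))"
    using summable_pos summable_neg by (auto intro!: convex simp: pos_def neg_def)
  ultimately show ?thesis
    unfolding DC_on_def by blast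
qed

lemma DC_on_add:
  assumes "DC_on I f" and "DC_on I g"
  shows "DC_on I (\<lambda>x. f x + g x)"
proof -
  obtain f1 f2 where "convex_on I f1" "convex_on I f2" "\<forall>x\<in>I. f x = f1 x - f2 x"
    using assms(1) unfolding DC_on_def by blast
  moreover obtain g1 g2 where "convex_on I g1" "convex_on I g2" "\<forall>x\<in>I. g x = g1 x - g2 x"
    using assms(2) unfolding DC_on_def by blast
  ultimately show ?thesis
    unfolding DC_on_def by (intro exI[of _ "\<lambda>x. f1 x + g1 x"] exI[of _ "\<lambda>x. f2 x + g2 x"]) auto
qed

text \<open>For l < m < r: the tent vanishing outside [l, r] with apex (m, 1), written with ramps.\<close>

definition hat :: "real \<Rightarrow> real \<Rightarrow> real \<Rightarrow> real \<Rightarrow> real" where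
  "hat l m r x = max 0 (x - l) / (m - l) - (1 / (m - l) + 1 / (r - m)) * max 0 (x - m)
     + max 0 (x - r) / (r - m)"

context
  fixes l m r :: real
  assumes l_less_m: "l < m" and m_less_r: "m < r"
begin

lemma hat_eq_0_left: "x \<le> l \<Longrightarrow> hat l m r x = 0"
  using l_less_m m_less_r by (simp add: hat_def)

lemma hat_rising: "l \<le> x \<Longrightarrow> x \<le> m \<Longrightarrow> hat l m r x = (x - l) / (m - l)"
  using l_less_m m_less_r by (simp add: hat_def)

lemma hat_falling: "m \<le> x \<Longrightarrow> x \<le> r \<Longrightarrow> hat l m r x = (r - x) / (r - m)"
  using l_less_m m_less_r by (simp add: hat_def divide_simps) (simp add: algebra_simps)

lemma hat_eq_0_right: "r \<le> x \<Longrightarrow> hat l m r x = 0"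
  using l_less_m m_less_r by (simp add: hat_def divide_simps) (simp add: algebra_simps)

end

lemma DC_on_hat_series:
  fixes v l m r :: "nat \<Rightarrow> real"
  assumes summable_rising: "summable (\<lambda>k. \<bar>v k / (m k - l k)\<bar>)"
    and summable_falling: "summable (\<lambda>k. \<bar>v k / (r k - m k)\<bar>)"
    and bounded: "\<And>k. \<bar>l k\<bar> \<le> B" "\<And>k. \<bar>m k\<bar> \<le> B" "\<And>k. \<bar>r k\<bar> \<le> B"
  shows "DC_on UNIV (\<lambda>x. \<Sum>k. v k * hat (l k) (m k) (r k) x)"
proof -
  define \<alpha> where "\<alpha> k = v k / (m k - l k)" for k
  define \<beta> where "\<beta> k = v k / (r k - m k)" for k
  have summable_peak: "summable (\<lambda>k. \<bar>- (\<alpha> k + \<beta> k)\<bar>)"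
    using summable_add[OF summable_rising summable_falling, folded \<alpha>_def \<beta>_def]
    by (rule summable_comparison_test') (simp only: real_norm_def abs_abs abs_minus_cancel abs_triangle_ineq)
  have "(\<Sum>k. v k * hat (l k) (m k) (r k) x)
      = (\<Sum>k. \<alpha> k * max 0 (x - l k)) + (\<Sum>k. - (\<alpha> k + \<beta> k) * max 0 (x - m k))
        + (\<Sum>k. \<beta> k * max 0 (x - r k))" for x
  proof -
    have "v k * hat (l k) (m k) (r k) x = \<alpha> k * max 0 (x - l k)
        + - (\<alpha> k + \<beta> k) * max 0 (x - m k) + \<beta> k * max 0 (x - r k)" for k
      by (simp add: hat_def \<alpha>_def \<beta>_def algebra_simps)
    moreover note summable_ramp_series[of \<alpha> l B x]
      summable_ramp_series[of "\<lambda>k. - (\<alpha> k + \<beta> k)" m B x] summable_ramp_series[of \<beta> r B x]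
    ultimately show ?thesis
      using summable_rising summable_falling summable_peak bounded
      by (simp add: suminf_add summable_add \<alpha>_def \<beta>_def)
  qed
  moreover have "DC_on UNIV (\<lambda>x. (\<Sum>k. \<alpha> k * max 0 (x - l k))
      + (\<Sum>k. - (\<alpha> k + \<beta> k) * max 0 (x - m k)) + (\<Sum>k. \<beta> k * max 0 (x - r k)))"
    using summable_rising summable_falling summable_peak bounded
    by (intro DC_on_add DC_on_ramp_series) (auto simp: \<alpha>_def \<beta>_def)
  ultimately show ?thesis by simp
qed

text \<open>
  The broken line through the points (p k, v k); the right foot 2 * p 0 of the first tent is an
  arbitrary point to the right of p 0.
\<close>

definition interpolant :: "(nat \<Rightarrow> real) \<Rightarrow> (nat \<Rightarrow> real) \<Rightarrow> real \<Rightarrow> real" where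
  "interpolant p v x =
     (\<Sum>k. v k * hat (p (Suc k)) (p k) (case k of 0 \<Rightarrow> 2 * p 0 | Suc i \<Rightarrow> p i) x)"

lemma geometric_shrinking:
  fixes p :: "nat \<Rightarrow> real"
  assumes "\<theta> < 1" and "\<And>k. 0 < p (Suc k) \<and> p (Suc k) \<le> \<theta> * p k"
  shows "0 < \<theta>" and "0 < p k" and "p (Suc k) < p k" and "p \<longlonglongrightarrow> 0"
proof -
  show "0 < \<theta>"
  proof (rule ccontr)
    assume "\<not> 0 < \<theta>"
    then have "\<theta> * p 1 \<le> 0"
      using assms(2)[of 0] by (simp add: mult_nonpos_nonneg)
    then show False
      using assms(2)[of 1] by simp
  qed
  then show pos: "0 < p k" for k
  proof (cases k)
    case 0
    have "0 < \<theta> * p 0"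
      using assms(2)[of 0] by linarith
    with \<open>0 < \<theta>\<close> 0 show ?thesis
      by (simp add: zero_less_mult_iff)
  qed (use assms(2) in auto)
  show "p (Suc k) < p k"
  proof -
    have "\<theta> * p k < p k"
      using assms(1) pos[of k] by simp
    then show ?thesis
      using assms(2)[of k] by linarith
  qed
  show "p \<longlonglongrightarrow> 0"
  proof (intro summable_LIMSEQ_zero summable_ratio_test[of \<theta> 0])
    show "norm (p (Suc n)) \<le> \<theta> * norm (p n)" for n
      using assms(2)[of n] pos[of n] pos[of "Suc n"] by simp
  qed (use assms(1) in simp)
qed

lemma summable_abs_divide_ge:
  fixes p g v :: "nat \<Rightarrow> real"
  assumes "summable (\<lambda>k. \<bar>v k\<bar> / p k)"
    and "0 < c" and "\<And>k. 0 < p k" and "\<And>k. c * p k \<le> g k"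
  shows "summable (\<lambda>k. \<bar>v k / g k\<bar>)"
proof (rule summable_comparison_test')
  show "summable (\<lambda>k. 1 / c * (\<bar>v k\<bar> / p k))"
    using assms(1) by (rule summable_mult)
  show "norm \<bar>v k / g k\<bar> \<le> 1 / c * (\<bar>v k\<bar> / p k)" for k
  proof -
    have "0 < c * p k" using assms(2,3) by simp
    moreover from this have "0 < g k" using assms(4) by (rule less_le_trans)
    ultimately have "\<bar>v k\<bar> / g k \<le> \<bar>v k\<bar> / (c * p k)"
      using assms(4) by (intro divide_left_mono) auto
    then show ?thesis
      using \<open>0 < g k\<close> assms(2) by (simp add: abs_divide)
  qed
qed

lemma DC_on_interpolant:
  fixes p v :: "nat \<Rightarrow> real"
  assumes "\<theta> < 1" and shrinking: "\<And>k. 0 < p (Suc k) \<and> p (Suc k) \<le> \<theta> * p k"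
    and summable: "summable (\<lambda>k. \<bar>v k\<bar> / p k)"
  shows "DC_on UNIV (interpolant p v)"
proof -
  note geometric = geometric_shrinking[where p = p, OF assms(1) shrinking]
  note pos = geometric(2) and strict = geometric(3)
  define q where "q k = (case k of 0 \<Rightarrow> 2 * p 0 | Suc i \<Rightarrow> p i)" for k
  have bounded: "\<bar>p k\<bar> \<le> 2 * p 0" "\<bar>q k\<bar> \<le> 2 * p 0" for k
  proof -
    have "\<bar>p i\<bar> \<le> 2 * p 0" for i
      using decseqD[of p 0 i] strict pos[of i] by (simp add: decseq_Suc_iff less_imp_le)
    then show "\<bar>p k\<bar> \<le> 2 * p 0" "\<bar>q k\<bar> \<le> 2 * p 0"
      using pos[of 0] by (auto simp: q_def split: nat.split)
  qed
  have gap: "(1 - \<theta>) * p k \<le> p k - p (Suc k)" for k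
    using shrinking[of k] by (simp add: algebra_simps)
  have "DC_on UNIV (\<lambda>x. \<Sum>k. v k * hat (p (Suc k)) (p k) (q k) x)"
  proof (rule DC_on_hat_series[OF _ _ bounded(1) bounded(1) bounded(2)])
    show "summable (\<lambda>k. \<bar>v k / (p k - p (Suc k))\<bar>)"
      using assms(1) pos gap by (intro summable_abs_divide_ge[OF summable, of "1 - \<theta>"]) auto
    show "summable (\<lambda>k. \<bar>v k / (q k - p k)\<bar>)"
    proof (rule summable_abs_divide_ge[OF summable, of "1 - \<theta>"])
      show "(1 - \<theta>) * p k \<le> q k - p k" for k
      proof (cases k)
        case 0
        then show ?thesis using geometric(1) pos[of 0] by (simp add: q_def)
      next
        case (Suc i)
        have "(1 - \<theta>) * p k \<le> (1 - \<theta>) * p i"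
          using Suc strict[of i] assms(1) by (intro mult_left_mono) auto
        then show ?thesis
          using Suc gap[of i] by (simp add: q_def)
      qed
    qed (use assms(1) pos in auto)
  qed
  then show ?thesis
    by (simp add: interpolant_def[abs_def] q_def)
qed

lemma interpolant_eq_0:
  fixes p v :: "nat \<Rightarrow> real"
  assumes "\<And>k. p (Suc k) < p k" and "\<And>k. 0 < p k" and "x \<le> 0"
  shows "interpolant p v x = 0"
proof -
  have "hat (p (Suc k)) (p k) (case k of 0 \<Rightarrow> 2 * p 0 | Suc i \<Rightarrow> p i) x = 0" for k
    using assms(1)[of k] assms(1)[of "k - 1"] assms(2)[of 0] assms(2)[of "Suc k"] assms(3)
    by (intro hat_eq_0_left) (auto split: nat.split)
  then show ?thesis
    by (simp add: interpolant_def)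
qed

lemma interpolant_eq_segment:
  fixes p v :: "nat \<Rightarrow> real"
  assumes strict: "\<And>k. p (Suc k) < p k" and pos: "\<And>k. 0 < p k"
    and x: "p (Suc j) < x" "x \<le> p j"
  shows "interpolant p v x = (v j - v (Suc j)) / (p j - p (Suc j)) * (x - p (Suc j)) + v (Suc j)"
proof -
  define q where "q k = (case k of 0 \<Rightarrow> 2 * p 0 | Suc i \<Rightarrow> p i)" for k
  have "decseq p"
    using strict by (simp add: decseq_Suc_iff less_imp_le)
  have pq: "p k < q k" for k
    using pos[of 0] strict[of "k - 1"] by (cases k) (auto simp: q_def)
  have "v k * hat (p (Suc k)) (p k) (q k) x = 0" if "k \<notin> {j, Suc j}" for k
  proof (cases "k < j")
    case True
    then have "p j \<le> p (Suc k)"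
      using \<open>decseq p\<close> by (simp add: decseqD)
    then show ?thesis
      using x hat_eq_0_left[OF strict pq] by simp
  next
    case False
    with that obtain i where "k = Suc i" "Suc j \<le> i"
      by (cases k) auto
    then have "q k \<le> p (Suc j)"
      using \<open>decseq p\<close> by (simp add: q_def decseqD)
    then show ?thesis
      using x hat_eq_0_right[OF strict pq] by simp
  qed
  then have "interpolant p v x
      = v j * hat (p (Suc j)) (p j) (q j) x + v (Suc j) * hat (p (Suc (Suc j))) (p (Suc j)) (q (Suc j)) x"
    unfolding interpolant_def q_def[symmetric] by (subst suminf_finite[of "{j, Suc j}"]) auto
  also have "\<dots> = v j * ((x - p (Suc j)) / (p j - p (Suc j)))
      + v (Suc j) * ((p j - x) / (p j - p (Suc j)))"
    using x strict[of j] strict[of "Suc j"] pq[of j]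
    by (simp add: hat_rising hat_falling less_imp_le q_def)
  also have "\<dots> = (v j - v (Suc j)) / (p j - p (Suc j)) * (x - p (Suc j)) + v (Suc j)"
  proof -
    have "(p j - x) / (p j - p (Suc j)) = 1 - (x - p (Suc j)) / (p j - p (Suc j))"
      using strict[of j] by (simp add: field_simps)
    then show ?thesis by (simp add: algebra_simps diff_divide_distrib)
  qed
  finally show ?thesis .
qed

lemma LIMSEQ_zero_bracket:
  fixes p :: "nat \<Rightarrow> real"
  assumes "p \<longlonglongrightarrow> 0" and "0 < x" and "x \<le> p 0"
  obtains j where "p (Suc j) < x" and "x \<le> p j"
proof -
  define k where "k = (LEAST k. p k < x)"
  have "\<exists>k. p k < x"
    using order_tendstoD(2)[OF assms(1,2)] by (auto simp: eventually_sequentially)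
  then have "p k < x"
    unfolding k_def by (rule LeastI_ex)
  then obtain j where j: "k = Suc j"
    using assms(3) by (cases k) auto
  have "x \<le> p j"
    using not_less_Least[of j "\<lambda>k. p k < x"] j by (simp add: k_def)
  then show thesis
    using that \<open>p k < x\<close> j by blast
qed

theorem lemma4p1:
  fixes a A :: "nat \<Rightarrow> real" and f :: "real \<Rightarrow> real"
  assumes dec: "\<And>n. n \<ge> 1 \<Longrightarrow> 0 < a (n + 1) \<and> a (n + 1) \<le> a n / 3"
    and summ: "summable (\<lambda>n. \<bar>A (n + 1)\<bar> / a (n + 1))"
    and f_pieces: "\<And>n x. n \<ge> 1 \<Longrightarrow> x \<in> {a (n + 1)<..a n} \<Longrightarrow>
        f x = (A n - A (n + 1)) / (a n - a (n + 1)) * (x - a (n + 1)) + A (n + 1)"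
    and f0: "f 0 = 0"
  shows "DCR_on {0..a 1} f"
proof -
  define p where "p k = a (Suc k)" for k
  define v where "v k = A (Suc k)" for k
  have shrinking: "0 < p (Suc k) \<and> p (Suc k) \<le> 1 / 3 * p k" for k
    using dec[of "Suc k"] by (simp add: p_def)
  note geometric = geometric_shrinking[where p = p, of "1 / 3", OF _ shrinking, simplified]
  note pos = geometric(2) and strict = geometric(3)
  have "f x = interpolant p v x" if "x \<in> {0..a 1}" for x
  proof (cases "x = 0")
    case True
    then show ?thesis
      using f0 interpolant_eq_0[where p = p, OF strict pos] by simp
  next
    case False
    with that have "0 < x" "x \<le> p 0"
      by (auto simp: p_def)
    with geometric(4) obtain j where "p (Suc j) < x" "x \<le> p j"
      by (rule LIMSEQ_zero_bracket)
    then show ?thesis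
      using f_pieces[of "Suc j" x] interpolant_eq_segment[where p = p, OF strict pos]
      by (simp add: p_def v_def)
  qed
  moreover have "DC_on UNIV (interpolant p v)"
    using shrinking summ by (intro DC_on_interpolant[of "1 / 3"]) (simp_all add: p_def v_def)
  ultimately show ?thesis
    unfolding DCR_on_def using pos[of 0] by (auto simp: p_def)
qed

end
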